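(* Let $l_{\max}\ge 1$ be an integer, let $C_1,\dots,C_{l_{\max}}\in\mathbb{R}$, and let $N_0\in\mathbb{N}$. For each integer $N\ge N_0$ let $E^N_1,\dots,E^N_N$ be a symmetric sequence of events (on some probability space depending on $N$) whose correlation coefficients $C^{(N)}_k$, $1\le k\le N$, satisfy $C^{(N)}_k=C_k$ for $1\le k\le l_{\max}$ and $C^{(N)}_k=0$ for $l_{\max}<k\le N$ (i.e. for every $N\ge N_0$ the sequence is correlated up to order $l_{\max}$ with the same correlation coefficients $C_1,\dots,C_{l_{\max}}$). Let $p_N$ denote the count probability of $E^N_1,\dots,E^N_N$. Then for every $s\in\mathbb{N}_0$ the limit $p_\infty(s):=\lim_{N\to\infty}p_N(s)$ exists, and the characteristic function of $p_\infty$ is $$\chi(u)=\sum_{s=0}^\infty e^{ius}p_\infty(s)=\exp\Big[\sum_{l=1}^{l_{\max}}\sum_{t=0}^{l}(-1)^{l-t}\frac{C_l}{l!}\binom{l}{t}e^{itu}\Big],\qquad u\in\mathbb{R}.$$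
   Context: For an event $E$ on a probability space $(\Omega,\Sigma,P)$, $\mathbbm{1}_E$ denotes its indicator function. A finite sequence of events $E_1,\dots,E_N$ on a common probability space is called symmetric if for all $r_1,\dots,r_N\in\{0,1\}$ and all permutations $\sigma$ of $\{1,\dots,N\}$, $P(\mathbbm{1}_{E_1}=r_1,\dots,\mathbbm{1}_{E_N}=r_N)=P(\mathbbm{1}_{E_1}=r_{\sigma(1)},\dots,\mathbbm{1}_{E_N}=r_{\sigma(N)})$. For $1\le k\le N$ the probability function of order $k$ is $P_k(r_1,\dots,r_k):=\sum_{r_{k+1},\dots,r_N\in\{0,1\}}P(\mathbbm{1}_{E_1}=r_1,\dots,\mathbbm{1}_{E_N}=r_N)$. The correlation functions $G_k:\{0,1\}^k\to\mathbb{R}$ are defined by $G_1:=P_1$ and, recursively for $1<k\le N$, $$G_k(r_1,\dots,r_k):=P_k(r_1,\dots,r_k)-\sum_{\sigma}\sum_{l=1}^{k-1}\frac{1}{(l-1)!\,(k-l)!}G_l(r_1,r_{\sigma(2)},\dots,r_{\sigma(l)})\,P_{k-l}(r_{\sigma(l+1)},\dots,r_{\sigma(k)}),$$ where $\sigma$ runs over all permutations of $\{2,\dots,k\}$. The correlation coefficient of order $k$ is $C_k:=N^kG_k(1,\dots,1)$. The count probability is $p_N(s):=\mathbb{E}\big[\delta(s-\sum_{l=1}^N\mathbbm{1}_{E_l})\big]$ for $s\in\mathbb{N}_0$, where $\delta(0)=1$ and $\delta(k)=0$ for $k\neq0$; i.e. $p_N(s)$ is the probability that exactly $s$ of the events occur.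 *)

theory Defs
  imports "HOL-Probability.Probability" "HOL-Combinatorics.Permutations"
begin

text \<open>Events of the N-th family are E 0, ..., E (N-1) (0-indexed shift of E_1..E_N).
  Configurations (r_1,...,r_k) are lists of naturals with entries in {0,1}.\<close>

definition bin_lists :: "nat \<Rightarrow> nat list set" where
  "bin_lists k = {rs. length rs = k \<and> set rs \<subseteq> {0,1}}"

definition joint_prob :: "'a measure \<Rightarrow> (nat \<Rightarrow> 'a set) \<Rightarrow> nat list \<Rightarrow> real" where
  "joint_prob M E rs =
     measure M {\<omega> \<in> space M. \<forall>i < length rs. indicator (E i) \<omega> = real (rs ! i)}"

definition symmetric_events :: "'a measure \<Rightarrow> (nat \<Rightarrow> 'a set) \<Rightarrow> nat \<Rightarrow> bool" where
  "symmetric_events M E N \<longleftrightarrow>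
     (\<forall>rs \<in> bin_lists N. \<forall>\<sigma>. \<sigma> permutes {..<N} \<longrightarrow>
        joint_prob M E rs = joint_prob M E (map (\<lambda>i. rs ! \<sigma> i) [0..<N]))"

definition prob_fun :: "'a measure \<Rightarrow> (nat \<Rightarrow> 'a set) \<Rightarrow> nat \<Rightarrow> nat list \<Rightarrow> real" where
  "prob_fun M E N rs = (\<Sum>rs' \<in> bin_lists (N - length rs). joint_prob M E (rs @ rs'))"

text \<open>Correlation functions G_k, k = length rs (1-based positions 1..k of the paper
  are 0..k-1 here; sigma runs over permutations of positions 2..k, i.e. {1..<k}).\<close>
function corr_fun :: "'a measure \<Rightarrow> (nat \<Rightarrow> 'a set) \<Rightarrow> nat \<Rightarrow> nat list \<Rightarrow> real" where
  "corr_fun M E N rs =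
     (if length rs \<le> 1 then prob_fun M E N rs
      else prob_fun M E N rs -
        (\<Sum>\<sigma> \<in> {\<sigma>. \<sigma> permutes {1..<length rs}}.
           \<Sum>l = 1..length rs - 1.
             1 / (fact (l - 1) * fact (length rs - l)) *
             corr_fun M E N (take l (map (\<lambda>i. rs ! \<sigma> i) [0..<length rs])) *
             prob_fun M E N (drop l (map (\<lambda>i. rs ! \<sigma> i) [0..<length rs]))))"
  by pat_completeness auto
termination
  by (relation "Wellfounded.measure (\<lambda>(M, E, N, rs). length rs)") auto

definition corr_coeff :: "'a measure \<Rightarrow> (nat \<Rightarrow> 'a set) \<Rightarrow> nat \<Rightarrow> nat \<Rightarrow> real" where
  "corr_coeff M E N k = real N ^ k * corr_fun M E N (replicate k 1)"

definition count_prob :: "'a measure \<Rightarrow> (nat \<Rightarrow> 'a set) \<Rightarrow> nat \<Rightarrow> nat \<Rightarrow> real" where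
  "count_prob M E N s = measure M {\<omega> \<in> space M. card {i \<in> {..<N}. \<omega> \<in> E i} = s}"

end

theory Submission
  imports Defs
begin

text \<open>For symmetric events the joint law is determined by the probability h(m) of one fixed
  configuration with m occurrences. Both p_N(s) = (N choose s) h(s) and P_k(1,...,1) are binomial
  transforms of h, so binomial inversion writes p_N(s) as an alternating sum of the P_k(1,...,1).
  At (1,...,1) the recursion defining the correlation functions collapses to the moment-cumulant
  recursion, so N^k P_k(1,...,1) = mu_k does not depend on N, where
  sum_k mu_k w^k / k! = exp (sum_l C_l w^l / l!). Hence
  p_N(s) = sum_j (-1)^j (N)_(s+j) / N^(s+j) * mu_(s+j) / (s! j!), where the falling-factorial
  ratios lie in [0, 1] and tend to 1; a factorial growth bound on mu makes Tannery's theorem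
  applicable. Finally sum_s z^s p_inf(s) = sum_k mu_k (z - 1)^k / k! = exp (sum_l C_l (z - 1)^l / l!),
  evaluated at z = exp (i u).\<close>

section \<open>Moments of a finitely supported cumulant sequence\<close>

fun moments :: "(nat \<Rightarrow> real) \<Rightarrow> nat \<Rightarrow> real" where
  "moments c k =
     (if k = 0 then 1 else (\<Sum>l = 1..k. real ((k - 1) choose (l - 1)) * c l * moments c (k - l)))"

declare moments.simps [simp del]

lemma moments_0 [simp]: "moments c 0 = 1"
  by (simp add: moments.simps)

lemma moments_Suc:
  "moments c (Suc n) = (\<Sum>i\<le>n. real (n choose i) * c (Suc i) * moments c (n - i))"
proof -
  have "moments c (Suc n) = (\<Sum>l = Suc 0..Suc n. real (n choose (l - 1)) * c l * moments c (Suc n - l))"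
    by (subst moments.simps) simp
  also have "\<dots> = (\<Sum>i\<le>n. real (n choose i) * c (Suc i) * moments c (n - i))"
    unfolding sum.shift_bounds_cl_Suc_ivl atMost_atLeast0 by simp
  finally show ?thesis .
qed

lemma binomial_mult_fact_le: "m \<le> n \<Longrightarrow> real (n choose m) * fact (n - m) \<le> fact n"
proof -
  assume "m \<le> n"
  then have "real (n choose m) * fact (n - m) = fact n / fact m"
    by (simp add: binomial_fact)
  also have "\<dots> \<le> fact n"
    using fact_ge_1[of m, where 'a=real] by (simp add: divide_le_eq)
  finally show ?thesis .
qed

lemma abs_moments_le:
  assumes k: "k \<ge> 1"
  shows "\<bar>moments c k\<bar> \<le> fact (k - 1) * (\<Sum>l = 1..k. \<bar>c l\<bar> * (\<bar>moments c (k - l)\<bar> / fact (k - l)))"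
proof -
  have "\<bar>moments c k\<bar> = \<bar>\<Sum>l = 1..k. real ((k - 1) choose (l - 1)) * c l * moments c (k - l)\<bar>"
    using k by (subst moments.simps) simp
  also have "\<dots> \<le> (\<Sum>l = 1..k. \<bar>real ((k - 1) choose (l - 1)) * c l * moments c (k - l)\<bar>)"
    by (rule sum_abs)
  also have "\<dots> \<le> (\<Sum>l = 1..k. fact (k - 1) * (\<bar>c l\<bar> * (\<bar>moments c (k - l)\<bar> / fact (k - l))))"
  proof (rule sum_mono)
    fix l assume l: "l \<in> {1..k}"
    then have "k - 1 - (l - 1) = k - l"
      by auto
    then have binomial: "real ((k - 1) choose (l - 1)) * fact (k - l) \<le> fact (k - 1)"
      using binomial_mult_fact_le[of "l - 1" "k - 1"] l by auto
    have "\<bar>real ((k - 1) choose (l - 1)) * c l * moments c (k - l)\<bar> =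
        (real ((k - 1) choose (l - 1)) * fact (k - l)) * (\<bar>c l\<bar> * (\<bar>moments c (k - l)\<bar> / fact (k - l)))"
      by (simp add: abs_mult)
    also have "\<dots> \<le> fact (k - 1) * (\<bar>c l\<bar> * (\<bar>moments c (k - l)\<bar> / fact (k - l)))"
      by (rule mult_right_mono[OF binomial]) simp
    finally show "\<bar>real ((k - 1) choose (l - 1)) * c l * moments c (k - l)\<bar> \<le>
        fact (k - 1) * (\<bar>c l\<bar> * (\<bar>moments c (k - l)\<bar> / fact (k - l)))" .
  qed
  finally show ?thesis
    by (simp add: sum_distrib_left)
qed

lemma moments_factorial_bound:
  assumes r: "r > 0" and c_support: "\<And>l. l > L \<Longrightarrow> c l = 0"
  shows "\<exists>K. \<forall>k. \<bar>moments c k\<bar> \<le> K * fact k * r ^ k"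
proof -
  define A where "A = (\<Sum>l = 1..L. \<bar>c l\<bar> / r ^ l)"
  have A: "(\<Sum>l = 1..k. \<bar>c l\<bar> / r ^ l) \<le> A" for k
  proof -
    have "(\<Sum>l = 1..k. \<bar>c l\<bar> / r ^ l) \<le> (\<Sum>l = 1..max k L. \<bar>c l\<bar> / r ^ l)"
      by (rule sum_mono2) (use r in auto)
    also have "\<dots> = A"
      unfolding A_def by (rule sum.mono_neutral_right) (use c_support in auto)
    finally show ?thesis .
  qed
  define k0 where "k0 = nat \<lceil>A\<rceil> + 1"
  define K where "K = (\<Sum>k<k0. \<bar>moments c k\<bar> / (fact k * r ^ k)) + 1"
  have K: "K \<ge> 1"
    unfolding K_def using r by (auto intro!: sum_nonneg divide_nonneg_nonneg)
  txt \<open>Below \<open>k0\<close> the bound holds by the choice of \<open>K\<close>; above it the recursion loses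
    a factor \<open>A / k \<le> 1\<close>.\<close>
  have "\<bar>moments c k\<bar> \<le> K * fact k * r ^ k" for k
  proof (induction k rule: less_induct)
    case (less k)
    show ?case
    proof (cases "k < k0")
      case True
      have pos: "fact k * r ^ k > 0" using r by simp
      have "\<bar>moments c k\<bar> / (fact k * r ^ k) \<le> (\<Sum>k<k0. \<bar>moments c k\<bar> / (fact k * r ^ k))"
        by (rule member_le_sum) (use True r in auto)
      also have "\<dots> \<le> K" unfolding K_def by simp
      finally show ?thesis using pos by (simp add: divide_le_eq mult.assoc)
    next
      case False
      then have k: "k \<ge> 1" and kA: "A \<le> real k" unfolding k0_def by linarith+
      have "\<bar>moments c k\<bar> \<le> fact (k - 1) * (\<Sum>l = 1..k. \<bar>c l\<bar> * (\<bar>moments c (k - l)\<bar> / fact (k - l)))"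
        by (rule abs_moments_le[OF k])
      also have "\<dots> \<le> fact (k - 1) * (\<Sum>l = 1..k. K * r ^ k * (\<bar>c l\<bar> / r ^ l))"
      proof (intro mult_left_mono sum_mono)
        fix l assume l: "l \<in> {1..k}"
        have "\<bar>moments c (k - l)\<bar> / fact (k - l) \<le> K * r ^ (k - l)"
          using less.IH[of "k - l"] l by (simp add: divide_le_eq mult_ac)
        then have "\<bar>c l\<bar> * (\<bar>moments c (k - l)\<bar> / fact (k - l)) \<le> \<bar>c l\<bar> * (K * r ^ (k - l))"
          by (rule mult_left_mono) simp
        also have "\<dots> = K * r ^ k * (\<bar>c l\<bar> / r ^ l)"
          using l r by (simp add: power_diff field_simps)
        finally show "\<bar>c l\<bar> * (\<bar>moments c (k - l)\<bar> / fact (k - l)) \<le> K * r ^ k * (\<bar>c l\<bar> / r ^ l)" .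
      qed simp
      also have "\<dots> \<le> fact (k - 1) * (K * r ^ k * real k)"
        unfolding sum_distrib_left[symmetric]
        using K r by (intro mult_left_mono order.trans[OF A kA]) auto
      also have "\<dots> = K * fact k * r ^ k"
        using k by (simp add: fact_reduce[of k])
      finally show ?thesis .
    qed
  qed
  then show ?thesis by blast
qed

lemma moments_abs_powser_summable:
  assumes c_support: "\<And>l. l > L \<Longrightarrow> c l = 0" and y: "y \<ge> 0"
  shows "summable (\<lambda>n. \<bar>moments c n\<bar> / fact n * y ^ n)"
proof -
  define r where "r = 1 / (2 * (y + 1))"
  have r: "r > 0"
    using y by (simp add: r_def)
  have pos: "0 < 2 * (y + 1)"
    using y by simp
  have "r * y = y / (2 * (y + 1))"
    by (simp add: r_def)
  also have "\<dots> \<le> (y + 1) / (2 * (y + 1))"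
    using pos by (intro divide_right_mono) auto
  also have "\<dots> = 1 / 2"
    using pos by simp
  finally have ry: "r * y \<le> 1 / 2" .
  obtain K where K: "\<And>k. \<bar>moments c k\<bar> \<le> K * fact k * r ^ k"
    using moments_factorial_bound[of r L c, OF r c_support] by blast
  have bound: "\<bar>moments c n\<bar> / fact n * y ^ n \<le> K * (1 / 2) ^ n" for n
  proof -
    have "\<bar>moments c n\<bar> / fact n \<le> K * r ^ n"
      using K[of n] by (simp add: divide_le_eq mult_ac)
    then have "\<bar>moments c n\<bar> / fact n * y ^ n \<le> K * r ^ n * y ^ n"
      by (rule mult_right_mono) (simp add: y)
    also have "\<dots> = K * (r * y) ^ n" by (simp add: power_mult_distrib)
    also have "\<dots> \<le> K * (1 / 2) ^ n"
    proof (intro mult_left_mono power_mono ry)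
      show "0 \<le> r * y" using r y by simp
      show "0 \<le> K" using K[of 0] by simp
    qed
    finally show ?thesis .
  qed
  show ?thesis
    by (rule summable_comparison_test'[where g = "\<lambda>n. K * (1 / 2) ^ n" and N = 0])
       (use bound y in \<open>auto simp: abs_mult intro: summable_mult summable_geometric\<close>)
qed

lemma moments_powser_summable:
  assumes c_support: "\<And>l. l > L \<Longrightarrow> c l = 0"
  shows "summable (\<lambda>n. norm (complex_of_real (moments c n / fact n) * w ^ n))"
proof -
  have "norm (complex_of_real (moments c n / fact n) * w ^ n) = \<bar>moments c n\<bar> / fact n * norm w ^ n" for n
    by (simp only: norm_mult norm_power norm_of_real) (simp add: abs_divide)
  then show ?thesis
    using moments_abs_powser_summable[of L c "norm w", OF c_support] by simp
qed

lemma diffs_moments: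
  "diffs (\<lambda>n. complex_of_real (moments c n / fact n)) n =
     (\<Sum>i\<le>n. complex_of_real (c (Suc i) / fact i) * complex_of_real (moments c (n - i) / fact (n - i)))"
proof -
  have "real (Suc n) * (moments c (Suc n) / fact (Suc n)) = moments c (Suc n) / fact n"
    by (simp add: fact_Suc[of n] del: of_nat_Suc)
  also have "\<dots> = (\<Sum>i\<le>n. c (Suc i) / fact i * (moments c (n - i) / fact (n - i)))"
    by (simp add: moments_Suc sum_divide_distrib binomial_fact)
  finally show ?thesis
    unfolding diffs_def by (metis (no_types, lifting) of_real_mult of_real_of_nat_eq of_real_sum sum.cong)
qed

lemma moments_series_has_field_derivative:
  assumes c_support: "\<And>l. l > L \<Longrightarrow> c l = 0"
  defines "f \<equiv> \<lambda>w. \<Sum>n. complex_of_real (moments c n / fact n) * w ^ n"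
  shows "(f has_field_derivative (\<Sum>m<L. complex_of_real (c (Suc m) / fact m) * w ^ m) * f w) (at w)"
proof -
  define a where "a n = complex_of_real (moments c n / fact n)" for n
  define d where "d m = complex_of_real (c (Suc m) / fact m)" for m
  have a_summable: "summable (\<lambda>n. norm (a n * y ^ n))" for y
    unfolding a_def by (rule moments_powser_summable[of L c, OF c_support])
  have d_vanishes: "d m * w ^ m = 0" if "m \<notin> {..<L}" for m
    using that c_support[of "Suc m"] by (simp add: d_def)
  have "(\<Sum>n. diffs a n * w ^ n) = (\<Sum>n. \<Sum>i\<le>n. (d i * w ^ i) * (a (n - i) * w ^ (n - i)))"
  proof (rule suminf_cong)
    fix n
    have "diffs a n * w ^ n = (\<Sum>i\<le>n. d i * a (n - i) * w ^ n)"
      unfolding a_def d_def diffs_moments by (simp add: sum_distrib_right)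
    also have "\<dots> = (\<Sum>i\<le>n. (d i * w ^ i) * (a (n - i) * w ^ (n - i)))"
      by (intro sum.cong refl) (simp add: mult_ac flip: power_add)
    finally show "diffs a n * w ^ n = (\<Sum>i\<le>n. (d i * w ^ i) * (a (n - i) * w ^ (n - i)))" .
  qed
  also have "\<dots> = (\<Sum>k. d k * w ^ k) * (\<Sum>k. a k * w ^ k)"
  proof (rule Cauchy_product[symmetric])
    show "summable (\<lambda>k. norm (d k * w ^ k))"
      by (rule summable_finite[of "{..<L}"]) (use d_vanishes in auto)
  qed (rule a_summable)
  also have "(\<Sum>k. d k * w ^ k) = (\<Sum>m<L. d m * w ^ m)"
    by (rule suminf_finite) (use d_vanishes in auto)
  finally have "(\<Sum>n. diffs a n * w ^ n) = (\<Sum>m<L. d m * w ^ m) * f w"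
    unfolding f_def a_def .
  moreover have "(f has_field_derivative (\<Sum>n. diffs a n * w ^ n)) (at w)"
    unfolding f_def a_def[symmetric]
    by (rule termdiffs_strong_converges_everywhere) (rule summable_norm_cancel[OF a_summable])
  ultimately show ?thesis
    unfolding d_def by simp
qed

lemma truncated_exp_series_has_field_derivative:
  "((\<lambda>w. \<Sum>m<L. complex_of_real (c (Suc m) / fact (Suc m)) * w ^ Suc m) has_field_derivative
     (\<Sum>m<L. complex_of_real (c (Suc m) / fact m) * w ^ m)) (at w)"
proof (rule DERIV_sum)
  fix m
  have "c (Suc m) / fact (Suc m) * real (Suc m) = c (Suc m) / fact m"
    by (simp add: fact_Suc[of m] del: of_nat_Suc)
  then have "complex_of_real (c (Suc m) / fact (Suc m)) * of_nat (Suc m) = complex_of_real (c (Suc m) / fact m)"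
    by (metis of_real_mult of_real_of_nat_eq)
  moreover have "((\<lambda>w. complex_of_real (c (Suc m) / fact (Suc m)) * w ^ Suc m) has_field_derivative
      complex_of_real (c (Suc m) / fact (Suc m)) * (of_nat (Suc m) * (1 * w ^ (Suc m - Suc 0)))) (at w)"
    by (intro DERIV_cmult DERIV_power DERIV_ident)
  ultimately show "((\<lambda>w. complex_of_real (c (Suc m) / fact (Suc m)) * w ^ Suc m) has_field_derivative
      complex_of_real (c (Suc m) / fact m) * w ^ m) (at w)"
    by (simp add: mult.assoc[symmetric])
qed

lemma moments_exp_series:
  assumes c_support: "\<And>l. l > L \<Longrightarrow> c l = 0"
  shows "(\<lambda>n. complex_of_real (moments c n / fact n) * w ^ n) sums
           exp (\<Sum>l = 1..L. complex_of_real (c l / fact l) * w ^ l)"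
proof -
  define f where "f w = (\<Sum>n. complex_of_real (moments c n / fact n) * w ^ n)" for w
  define P where "P w = (\<Sum>m<L. complex_of_real (c (Suc m) / fact (Suc m)) * w ^ Suc m)" for w
  define P' where "P' w = (\<Sum>m<L. complex_of_real (c (Suc m) / fact m) * w ^ m)" for w
  have P_deriv: "(P has_field_derivative P' w) (at w)" for w
    unfolding P_def P'_def by (rule truncated_exp_series_has_field_derivative)
  txt \<open>Both \<open>f\<close> and \<open>exp \<circ> P\<close> solve \<open>y' = P' y\<close>, \<open>y 0 = 1\<close>.\<close>
  have deriv_0: "((\<lambda>w. f w * exp (- P w)) has_field_derivative 0) (at w within UNIV)" for w
  proof -
    have f_deriv: "(f has_field_derivative P' w * f w) (at w)"
      unfolding f_def P'_def by (rule moments_series_has_field_derivative[of L c, OF c_support])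
    have "((\<lambda>w. f w * exp (- P w)) has_field_derivative
        P' w * f w * exp (- P w) + exp (- P w) * - P' w * f w) (at w)"
      by (rule DERIV_mult[OF f_deriv DERIV_chain2[OF DERIV_exp DERIV_minus[OF P_deriv]]])
    then show ?thesis by (simp add: algebra_simps)
  qed
  obtain k where k: "\<And>w. f w * exp (- P w) = k"
    using has_field_derivative_zero_constant[OF convex_UNIV deriv_0] by blast
  have "f 0 = 1"
    unfolding f_def by (subst powser_zero) simp
  moreover have "P 0 = 0"
    unfolding P_def by simp
  ultimately have "f 0 * exp (- P 0) = 1"
    by simp
  then have "f w = exp (P w)"
    using k[of w] k[of 0] by (metis exp_minus_inverse mult.commute mult.left_commute mult_1)
  moreover have "P w = (\<Sum>l = 1..L. complex_of_real (c l / fact l) * w ^ l)"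
    unfolding P_def One_nat_def by (rule sum.atLeast1_atMost_eq[symmetric])
  moreover have "(\<lambda>n. complex_of_real (moments c n / fact n) * w ^ n) sums f w"
    unfolding f_def by (rule summable_sums, rule summable_norm_cancel, rule moments_powser_summable[of L c, OF c_support])
  ultimately show ?thesis by simp
qed

section \<open>The limit distribution\<close>

lemma binomial_ring_fact:
  fixes x y :: "'a :: field_char_0"
  shows "(\<Sum>s\<le>k. x ^ s * y ^ (k - s) / (fact s * fact (k - s))) = (x + y) ^ k / fact k"
proof -
  have "(x + y) ^ k / fact k = (\<Sum>s\<le>k. of_nat (k choose s) * x ^ s * y ^ (k - s) / fact k)"
    by (simp add: binomial_ring sum_divide_distrib)
  also have "\<dots> = (\<Sum>s\<le>k. x ^ s * y ^ (k - s) / (fact s * fact (k - s)))"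
    by (intro sum.cong refl) (simp add: binomial_fact)
  finally show ?thesis ..
qed

definition limit_count_prob :: "(nat \<Rightarrow> real) \<Rightarrow> nat \<Rightarrow> real" where
  "limit_count_prob c s = (\<Sum>j. (-1) ^ j * moments c (s + j) / (fact s * fact j))"

lemma limit_count_prob_abs_summable:
  assumes c_support: "\<And>l. l > L \<Longrightarrow> c l = 0"
  shows "summable (\<lambda>j. \<bar>moments c (s + j)\<bar> / (fact s * fact j))"
proof (rule summable_comparison_test'[where N = 0])
  show "summable (\<lambda>j. \<bar>moments c (j + s)\<bar> / fact (j + s) * 2 ^ (j + s))"
    using moments_abs_powser_summable[of L c 2, OF c_support]
    by (subst summable_iff_shift) simp
  show "norm (\<bar>moments c (s + j)\<bar> / (fact s * fact j)) \<le> \<bar>moments c (j + s)\<bar> / fact (j + s) * 2 ^ (j + s)"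
    for j
  proof -
    have "real ((s + j) choose s) \<le> 2 ^ (s + j)"
      using binomial_le_pow2[of "s + j" s] by (metis of_nat_le_iff of_nat_numeral of_nat_power)
    then have "1 / (fact s * fact j) \<le> (2::real) ^ (s + j) / fact (s + j)"
      by (simp add: binomial_fact field_simps)
    then have "\<bar>moments c (s + j)\<bar> * (1 / (fact s * fact j))
        \<le> \<bar>moments c (s + j)\<bar> * (2 ^ (s + j) / fact (s + j))"
      by (rule mult_left_mono) simp
    then show ?thesis
      by (simp add: add.commute)
  qed
qed

lemma limit_count_prob_sums:
  assumes c_support: "\<And>l. l > L \<Longrightarrow> c l = 0"
  shows "(\<lambda>j. (-1) ^ j * moments c (s + j) / (fact s * fact j)) sums limit_count_prob c s"
  unfolding limit_count_prob_def
  by (rule summable_sums, rule summable_rabs_cancel)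
     (use limit_count_prob_abs_summable[of L c, OF c_support] in \<open>simp add: abs_mult\<close>)

lemma tendsto_limit_count_prob:
  assumes c_support: "\<And>l. l > L \<Longrightarrow> c l = 0"
    and d_bound: "\<And>N k. \<bar>d N k\<bar> \<le> 1" and d_lim: "\<And>k. (\<lambda>N. d N k) \<longlonglongrightarrow> 1"
  shows "(\<lambda>N. \<Sum>j. (-1) ^ j * d N (s + j) * moments c (s + j) / (fact s * fact j))
           \<longlonglongrightarrow> limit_count_prob c s"
proof -
  have "(\<lambda>N. \<Sum>j. (-1) ^ j * d N (s + j) * moments c (s + j) / (fact s * fact j))
      \<longlonglongrightarrow> (\<Sum>j. (-1) ^ j * 1 * moments c (s + j) / (fact s * fact j))"
  proof (rule tannerys_theorem[where M = "\<lambda>j. \<bar>moments c (s + j)\<bar> / (fact s * fact j)", THEN conjunct2, THEN conjunct2])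
    show "(\<lambda>N. (-1) ^ j * d N (s + j) * moments c (s + j) / (fact s * fact j))
        \<longlonglongrightarrow> (-1) ^ j * 1 * moments c (s + j) / (fact s * fact j)" for j
      by (intro tendsto_intros d_lim) simp
    show "\<forall>\<^sub>F (j, N) in at_top \<times>\<^sub>F sequentially.
        norm ((-1) ^ j * d N (s + j) * moments c (s + j) / (fact s * fact j))
          \<le> \<bar>moments c (s + j)\<bar> / (fact s * fact j)"
    proof (rule always_eventually, clarify)
      fix j N
      have "\<bar>d N (s + j)\<bar> * \<bar>moments c (s + j)\<bar> \<le> 1 * \<bar>moments c (s + j)\<bar>"
        by (intro mult_right_mono d_bound) simp
      then show "norm ((-1) ^ j * d N (s + j) * moments c (s + j) / (fact s * fact j))
          \<le> \<bar>moments c (s + j)\<bar> / (fact s * fact j)"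
        by (simp add: abs_mult divide_right_mono)
    qed
  qed (simp_all add: limit_count_prob_abs_summable[of L c, OF c_support])
  then show ?thesis
    unfolding limit_count_prob_def by simp
qed

lemma limit_count_prob_mult_has_sum:
  assumes c_support: "\<And>l. l > L \<Longrightarrow> c l = 0"
  shows "((\<lambda>j. complex_of_real (moments c (s + j)) * (z ^ s * (-1) ^ j / (fact s * fact j)))
           has_sum z ^ s * complex_of_real (limit_count_prob c s)) UNIV"
proof (rule norm_summable_imp_has_sum)
  have "(\<lambda>j. z ^ s * complex_of_real ((-1) ^ j * moments c (s + j) / (fact s * fact j)))
      sums (z ^ s * complex_of_real (limit_count_prob c s))"
    by (intro sums_mult sums_of_real limit_count_prob_sums[of L c, OF c_support])
  then show "(\<lambda>j. complex_of_real (moments c (s + j)) * (z ^ s * (-1) ^ j / (fact s * fact j)))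
      sums (z ^ s * complex_of_real (limit_count_prob c s))"
    by (simp add: mult_ac)
  have "norm (complex_of_real (moments c (s + j)) * (z ^ s * (-1) ^ j / (fact s * fact j))) =
      norm z ^ s * (\<bar>moments c (s + j)\<bar> / (fact s * fact j))" for j
    by (simp add: norm_mult norm_divide norm_power)
  then show "summable (\<lambda>j. norm (complex_of_real (moments c (s + j)) * (z ^ s * (-1) ^ j / (fact s * fact j))))"
    using summable_mult[OF limit_count_prob_abs_summable[of L c s, OF c_support], where c = "norm z ^ s"]
    by simp
qed

text \<open>The double series \<open>\<Sum>\<^sub>k\<Sum>\<^sub>s\<close> coming from \<open>\<Sum>\<^sub>k \<mu>\<^sub>k (z - 1)\<^sup>k / k!\<close> is absolutely
  summable, so it may be resummed along \<open>k = s + j\<close>.\<close>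

lemma limit_count_prob_generating_function:
  assumes c_support: "\<And>l. l > L \<Longrightarrow> c l = 0"
  shows "(\<lambda>s. z ^ s * complex_of_real (limit_count_prob c s)) sums
           exp (\<Sum>l = 1..L. complex_of_real (c l / fact l) * (z - 1) ^ l)"
proof -
  define g where "g = (\<lambda>(k, s). complex_of_real (moments c k) *
                        (z ^ s * (-1) ^ (k - s) / (fact s * fact (k - s))))"
  define T where "T = Sigma (UNIV :: nat set) (\<lambda>k. {..k})"
  have row_sum: "(\<Sum>s\<le>k. g (k, s)) = complex_of_real (moments c k / fact k) * (z - 1) ^ k" for k
  proof -
    have "(\<Sum>s\<le>k. g (k, s)) =
        complex_of_real (moments c k) * (\<Sum>s\<le>k. z ^ s * (-1) ^ (k - s) / (fact s * fact (k - s)))"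
      by (simp only: g_def case_prod_conv sum_distrib_left)
    also have "\<dots> = complex_of_real (moments c k) * ((z - 1) ^ k / fact k)"
      using binomial_ring_fact[of z "-1" k] by simp
    finally show ?thesis
      by simp
  qed
  have row_norm_sum: "(\<Sum>s\<le>k. norm (g (k, s))) = \<bar>moments c k\<bar> / fact k * (norm z + 1) ^ k" for k
  proof -
    have "(\<Sum>s\<le>k. norm (g (k, s))) =
        \<bar>moments c k\<bar> * (\<Sum>s\<le>k. norm z ^ s * 1 ^ (k - s) / (fact s * fact (k - s)))"
      by (simp add: g_def sum_distrib_left norm_mult norm_divide norm_power)
    then show ?thesis
      by (simp only: binomial_ring_fact) simp
  qed
  have "(\<lambda>x. norm (g x)) summable_on T"
    unfolding T_def
  proof (rule summable_on_SigmaI)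
    show "(\<lambda>k. \<bar>moments c k\<bar> / fact k * (norm z + 1) ^ k) summable_on UNIV"
      using moments_abs_powser_summable[of L c "norm z + 1", OF c_support]
      by (subst summable_on_UNIV_nonneg_real_iff) auto
  qed (use has_sum_finiteI[OF finite_atMost row_norm_sum[symmetric]] in auto)
  then obtain S where S: "(g has_sum S) T"
    using abs_summable_summable has_sum_infsum by blast
  have "((\<lambda>k. complex_of_real (moments c k / fact k) * (z - 1) ^ k) has_sum S) UNIV"
    using S has_sum_finiteI[OF finite_atMost row_sum[symmetric]] unfolding T_def by (rule has_sum_Sigma')
  moreover have "((\<lambda>k. complex_of_real (moments c k / fact k) * (z - 1) ^ k) has_sum
      exp (\<Sum>l = 1..L. complex_of_real (c l / fact l) * (z - 1) ^ l)) UNIV"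
    by (rule norm_summable_imp_has_sum[OF moments_powser_summable[of L c, OF c_support]
          moments_exp_series[of L c, OF c_support]])
  ultimately have S_eq: "S = exp (\<Sum>l = 1..L. complex_of_real (c l / fact l) * (z - 1) ^ l)"
    by (rule has_sum_unique)
  have "((\<lambda>(s, j). g (s + j, s)) has_sum S) (UNIV \<times> UNIV) \<longleftrightarrow> (g has_sum S) T"
    unfolding T_def
    by (rule has_sum_reindex_bij_witness[where j = "\<lambda>(s, j). (s + j, s)" and i = "\<lambda>(k, s). (s, k - s)"]) auto
  then have diagonals: "((\<lambda>(s, j). g (s + j, s)) has_sum S) (UNIV \<times> UNIV)"
    using S by simp
  have columns: "((\<lambda>j. g (s + j, s)) has_sum z ^ s * complex_of_real (limit_count_prob c s)) UNIV" for s
    using limit_count_prob_mult_has_sum[of L c s z, OF c_support] by (simp add: g_def)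
  have "((\<lambda>s. z ^ s * complex_of_real (limit_count_prob c s)) has_sum S) UNIV"
    by (rule has_sum_Sigma'[OF diagonals]) (simp add: columns)
  then show ?thesis
    unfolding S_eq by (rule has_sum_imp_sums)
qed

section \<open>Symmetric families of events\<close>

lemma bin_lists_0: "bin_lists 0 = {[]}"
  by (auto simp: bin_lists_def)

lemma bin_lists_Suc: "bin_lists (Suc n) = Cons 0 ` bin_lists n \<union> Cons 1 ` bin_lists n"
  by (auto simp: bin_lists_def length_Suc_conv)

lemma finite_bin_lists: "finite (bin_lists n)"
proof -
  have "bin_lists n = {xs. set xs \<subseteq> {0, 1} \<and> length xs = n}"
    by (auto simp: bin_lists_def)
  then show ?thesis
    using finite_lists_length_eq[of "{0 :: nat, 1}" n] by simp
qed

lemma sum_atMost_Suc_choose: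
  fixes f :: "nat \<Rightarrow> real"
  shows "(\<Sum>j\<le>Suc n. real (Suc n choose j) * f j) =
         (\<Sum>j\<le>n. real (n choose j) * f j) + (\<Sum>j\<le>n. real (n choose j) * f (Suc j))"
proof -
  have "(\<Sum>j\<le>Suc n. real (Suc n choose j) * f j)
      = f 0 + (\<Sum>j\<le>n. real (n choose Suc j) * f (Suc j)) + (\<Sum>j\<le>n. real (n choose j) * f (Suc j))"
    by (subst sum.atMost_Suc_shift) (simp add: sum.distrib algebra_simps)
  also have "f 0 + (\<Sum>j\<le>n. real (n choose Suc j) * f (Suc j)) = (\<Sum>j\<le>Suc n. real (n choose j) * f j)"
    by (subst sum.atMost_Suc_shift) simp
  also have "\<dots> = (\<Sum>j\<le>n. real (n choose j) * f j)"
    by simp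
  finally show ?thesis .
qed

lemma sum_bin_lists_sum_list:
  fixes f :: "nat \<Rightarrow> real"
  shows "(\<Sum>rs\<in>bin_lists n. f (sum_list rs)) = (\<Sum>j\<le>n. real (n choose j) * f j)"
proof (induction n arbitrary: f)
  case 0
  then show ?case by (simp add: bin_lists_0)
next
  case (Suc n)
  have "(\<Sum>rs\<in>bin_lists (Suc n). f (sum_list rs)) =
        (\<Sum>rs\<in>Cons 0 ` bin_lists n. f (sum_list rs)) + (\<Sum>rs\<in>Cons 1 ` bin_lists n. f (sum_list rs))"
    unfolding bin_lists_Suc by (rule sum.union_disjoint) (auto simp: finite_bin_lists)
  also have "\<dots> = (\<Sum>rs\<in>bin_lists n. f (sum_list rs)) + (\<Sum>rs\<in>bin_lists n. f (Suc (sum_list rs)))"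
    by (simp add: sum.reindex)
  also have "\<dots> = (\<Sum>j\<le>Suc n. real (Suc n choose j) * f j)"
    unfolding sum_atMost_Suc_choose Suc[of f] Suc[of "\<lambda>j. f (Suc j)"] ..
  finally show ?case .
qed

lemma mset_bin_list:
  assumes "set rs \<subseteq> {0, 1}"
  shows "mset rs = mset (replicate (sum_list rs) 1 @ replicate (length rs - sum_list rs) 0)"
    and "sum_list rs \<le> length rs"
  using assms
proof (induction rs)
  case (Cons a rs)
  { case 1 with Cons show ?case by (auto simp: Suc_diff_le) }
  { case 2 with Cons show ?case by auto }
qed simp_all

lemma binomial_inversion:
  fixes H :: "nat \<Rightarrow> real"
  shows "(\<Sum>j\<le>n. (-1) ^ j * real (n choose j) * (\<Sum>i\<le>n - j. real ((n - j) choose i) * H (j + i))) = H 0"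
proof -
  have triangle: "Sigma {..n} (\<lambda>j. {..n - j}) = {(j, i). j + i \<le> n}"
    by auto
  have "(\<Sum>j\<le>n. (-1) ^ j * real (n choose j) * (\<Sum>i\<le>n - j. real ((n - j) choose i) * H (j + i))) =
        (\<Sum>(j, i)\<in>{(j, i). j + i \<le> n}. (-1) ^ j * real (n choose j) * real ((n - j) choose i) * H (j + i))"
    by (simp add: sum.Sigma[symmetric] sum_distrib_left mult_ac flip: triangle)
  also have "\<dots> = (\<Sum>m\<le>n. \<Sum>j\<le>m. (-1) ^ j * real (n choose j) * real ((n - j) choose (m - j)) * H (j + (m - j)))"
    by (rule sum.triangle_reindex_eq)
  also have "\<dots> = (\<Sum>m\<le>n. real (n choose m) * H m * (\<Sum>j\<le>m. (-1) ^ j * real (m choose j)))"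
  proof (rule sum.cong[OF refl])
    fix m assume m: "m \<in> {..n}"
    show "(\<Sum>j\<le>m. (-1) ^ j * real (n choose j) * real ((n - j) choose (m - j)) * H (j + (m - j))) =
          real (n choose m) * H m * (\<Sum>j\<le>m. (-1) ^ j * real (m choose j))"
      unfolding sum_distrib_left
    proof (rule sum.cong[OF refl])
      fix j assume j: "j \<in> {..m}"
      have "(n choose m) * (m choose j) = (n choose j) * ((n - j) choose (m - j))"
        by (rule choose_mult) (use j m in auto)
      then have "real (n choose j) * real ((n - j) choose (m - j)) = real (n choose m) * real (m choose j)"
        by (metis of_nat_mult)
      moreover have "j + (m - j) = m" using j by auto
      ultimately show "(-1) ^ j * real (n choose j) * real ((n - j) choose (m - j)) * H (j + (m - j)) =
          real (n choose m) * H m * ((-1) ^ j * real (m choose j))"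
        by (simp add: mult_ac)
    qed
  qed
  also have "\<dots> = (\<Sum>m\<le>n. if m = 0 then H 0 else 0)"
    by (intro sum.cong refl) (auto simp: choose_alternating_sum)
  also have "\<dots> = H 0"
    by simp
  finally show ?thesis .
qed

definition occurrence_list :: "(nat \<Rightarrow> 'a set) \<Rightarrow> nat \<Rightarrow> 'a \<Rightarrow> nat list" where
  "occurrence_list E N \<omega> = map (\<lambda>i. if \<omega> \<in> E i then 1 else 0) [0..<N]"

lemma occurrence_list_in_bin_lists: "occurrence_list E N \<omega> \<in> bin_lists N"
  by (auto simp: bin_lists_def occurrence_list_def)

lemma occurrence_list_eq_iff:
  assumes rs: "rs \<in> bin_lists N"
  shows "occurrence_list E N \<omega> = rs \<longleftrightarrow> (\<forall>i<N. indicator (E i) \<omega> = real (rs ! i))"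
proof -
  have len: "length rs = N"
    using rs by (simp add: bin_lists_def)
  have bin: "rs ! i = 0 \<or> rs ! i = 1" if "i < N" for i
  proof -
    have "rs ! i \<in> set rs"
      using that len by simp
    then show ?thesis
      using rs by (auto simp: bin_lists_def)
  qed
  have "occurrence_list E N \<omega> = rs \<longleftrightarrow> (\<forall>i<N. (if \<omega> \<in> E i then 1 else 0) = rs ! i)"
    by (auto simp: occurrence_list_def list_eq_iff_nth_eq len)
  also have "\<dots> \<longleftrightarrow> (\<forall>i<N. indicator (E i) \<omega> = real (rs ! i))"
    using bin by (auto simp: indicator_def)
  finally show ?thesis .
qed

lemma sum_list_occurrence_list: "sum_list (occurrence_list E N \<omega>) = card {i \<in> {..<N}. \<omega> \<in> E i}"
proof (induction N)
  case (Suc N)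
  have "{i \<in> {..<Suc N}. \<omega> \<in> E i} = {i \<in> {..<N}. \<omega> \<in> E i} \<union> (if \<omega> \<in> E N then {N} else {})"
    by (auto simp: less_Suc_eq)
  with Suc show ?case
    by (auto simp: occurrence_list_def)
qed (simp add: occurrence_list_def)

lemma joint_prob_eq_measure_occurrence_list:
  "rs \<in> bin_lists N \<Longrightarrow> joint_prob M E rs = measure M {\<omega> \<in> space M. occurrence_list E N \<omega> = rs}"
  unfolding joint_prob_def by (simp add: occurrence_list_eq_iff bin_lists_def)

lemma joint_prob_symmetric:
  assumes "symmetric_events M E N" and rs: "rs \<in> bin_lists N"
  shows "joint_prob M E rs = joint_prob M E (replicate (sum_list rs) 1 @ replicate (N - sum_list rs) 0)"
proof -
  have len: "length rs = N" and bin: "set rs \<subseteq> {0, 1}"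
    using rs by (auto simp: bin_lists_def)
  obtain p where p: "p permutes {..<length rs}"
    and sorted: "permute_list p rs = replicate (sum_list rs) 1 @ replicate (N - sum_list rs) 0"
    using mset_bin_list(1)[OF bin] len by (metis mset_eq_permutation)
  have "joint_prob M E rs = joint_prob M E (map (\<lambda>i. rs ! p i) [0..<N])"
    using assms p len unfolding symmetric_events_def by auto
  also have "map (\<lambda>i. rs ! p i) [0..<N] = replicate (sum_list rs) 1 @ replicate (N - sum_list rs) 0"
    using sorted len by (simp add: permute_list_def)
  finally show ?thesis .
qed

locale symmetric_family = prob_space M for M :: "'a measure" +
  fixes E :: "nat \<Rightarrow> 'a set" and N :: nat
  assumes sets_E: "\<And>i. i < N \<Longrightarrow> E i \<in> sets M"
    and symmetric: "symmetric_events M E N"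
begin

definition config_prob :: "nat \<Rightarrow> real" where
  "config_prob m = joint_prob M E (replicate m 1 @ replicate (N - m) 0)"

lemma joint_prob_eq_config_prob: "rs \<in> bin_lists N \<Longrightarrow> joint_prob M E rs = config_prob (sum_list rs)"
  unfolding config_prob_def by (rule joint_prob_symmetric[OF symmetric])

lemma sets_occurrence_list_eq:
  assumes "rs \<in> bin_lists N"
  shows "{\<omega> \<in> space M. occurrence_list E N \<omega> = rs} \<in> sets M"
proof -
  have "{\<omega> \<in> space M. occurrence_list E N \<omega> = rs} =
      {\<omega> \<in> space M. \<forall>i\<in>{..<N}. indicator (E i) \<omega> = real (rs ! i)}"
    using occurrence_list_eq_iff[OF assms, of E] by auto
  also have "\<dots> \<in> sets M"
  proof (rule sets.sets_Collect_finite_All)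
    fix i assume i: "i \<in> {..<N}"
    have "{\<omega> \<in> space M. indicator (E i) \<omega> = real (rs ! i)} =
        (if rs ! i = 1 then space M \<inter> E i else if rs ! i = 0 then space M - E i else {})"
      by (auto simp: indicator_def)
    then show "{\<omega> \<in> space M. indicator (E i) \<omega> = real (rs ! i)} \<in> sets M"
      using sets_E[of i] i by auto
  qed simp
  finally show ?thesis .
qed

lemma prob_occurrence_list:
  "prob {\<omega> \<in> space M. Q (occurrence_list E N \<omega>)} = (\<Sum>rs\<in>{rs \<in> bin_lists N. Q rs}. joint_prob M E rs)"
proof -
  have "{\<omega> \<in> space M. Q (occurrence_list E N \<omega>)} =
      (\<Union>rs\<in>{rs \<in> bin_lists N. Q rs}. {\<omega> \<in> space M. occurrence_list E N \<omega> = rs})"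
    using occurrence_list_in_bin_lists[of E N] by auto
  then have "prob {\<omega> \<in> space M. Q (occurrence_list E N \<omega>)} =
      (\<Sum>rs\<in>{rs \<in> bin_lists N. Q rs}. prob {\<omega> \<in> space M. occurrence_list E N \<omega> = rs})"
    by (simp only:) (rule finite_measure_finite_Union,
        auto simp: finite_bin_lists disjoint_family_on_def intro!: sets_occurrence_list_eq)
  also have "\<dots> = (\<Sum>rs\<in>{rs \<in> bin_lists N. Q rs}. joint_prob M E rs)"
    by (rule sum.cong) (auto simp: joint_prob_eq_measure_occurrence_list)
  finally show ?thesis .
qed

lemma count_prob_eq_config_prob: "count_prob M E N s = real (N choose s) * config_prob s"
proof -
  have "count_prob M E N s = (\<Sum>rs\<in>{rs \<in> bin_lists N. sum_list rs = s}. joint_prob M E rs)"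
    unfolding count_prob_def sum_list_occurrence_list[symmetric] by (rule prob_occurrence_list)
  also have "\<dots> = (\<Sum>rs\<in>{rs \<in> bin_lists N. sum_list rs = s}. config_prob (sum_list rs))"
    by (rule sum.cong) (auto simp: joint_prob_eq_config_prob)
  also have "\<dots> = (\<Sum>rs\<in>bin_lists N. if sum_list rs = s then config_prob (sum_list rs) else 0)"
    by (rule sum.inter_filter[OF finite_bin_lists])
  also have "\<dots> = (\<Sum>j\<le>N. real (N choose j) * (if j = s then config_prob j else 0))"
    by (rule sum_bin_lists_sum_list)
  also have "\<dots> = real (N choose s) * config_prob s"
    by (cases "s \<le> N") (auto simp: if_distrib sum.delta' cong: if_cong)
  finally show ?thesis .
qed

lemma prob_fun_Nil: "prob_fun M E N [] = 1"
  using prob_occurrence_list[of "\<lambda>_. True"] prob_space by (simp add: prob_fun_def)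

lemma prob_fun_ones:
  assumes "k \<le> N"
  shows "prob_fun M E N (replicate k 1) = (\<Sum>j\<le>N - k. real ((N - k) choose j) * config_prob (k + j))"
proof -
  have "prob_fun M E N (replicate k 1) = (\<Sum>rs\<in>bin_lists (N - k). joint_prob M E (replicate k 1 @ rs))"
    by (simp add: prob_fun_def)
  also have "\<dots> = (\<Sum>rs\<in>bin_lists (N - k). config_prob (k + sum_list rs))"
  proof (rule sum.cong[OF refl])
    fix rs assume "rs \<in> bin_lists (N - k)"
    then have "replicate k 1 @ rs \<in> bin_lists N"
      using assms by (auto simp: bin_lists_def)
    then show "joint_prob M E (replicate k 1 @ rs) = config_prob (k + sum_list rs)"
      by (simp add: joint_prob_eq_config_prob sum_list_replicate)
  qed
  also have "\<dots> = (\<Sum>j\<le>N - k. real ((N - k) choose j) * config_prob (k + j))"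
    by (rule sum_bin_lists_sum_list)
  finally show ?thesis .
qed

lemma config_prob_eq_alternating_sum:
  assumes "s \<le> N"
  shows "config_prob s = (\<Sum>j\<le>N - s. (-1) ^ j * real ((N - s) choose j) * prob_fun M E N (replicate (s + j) 1))"
proof -
  have "prob_fun M E N (replicate (s + j) 1) =
      (\<Sum>i\<le>N - s - j. real ((N - s - j) choose i) * config_prob (s + (j + i)))" if "j \<le> N - s" for j
    using prob_fun_ones[of "s + j"] that assms by (simp add: add.assoc diff_diff_add)
  then show ?thesis
    using binomial_inversion[of "N - s" "\<lambda>i. config_prob (s + i)"] by simp
qed

end

section \<open>Correlation functions at (1, ..., 1)\<close>

declare corr_fun.simps [simp del]

lemma map_nth_replicate_permutes:
  assumes "\<sigma> permutes A" and "A \<subseteq> {..<k}"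
  shows "map (\<lambda>i. replicate k x ! \<sigma> i) [0..<k] = replicate k x"
proof (rule nth_equalityI)
  fix i assume "i < length (map (\<lambda>i. replicate k x ! \<sigma> i) [0..<k])"
  then have i: "i < k" by simp
  have "\<sigma> i < k"
    using permutes_in_image[OF assms(1)] permutes_not_in[OF assms(1)] assms(2) i
    by (cases "i \<in> A") auto
  then show "map (\<lambda>i. replicate k x ! \<sigma> i) [0..<k] ! i = replicate k x ! i"
    using i by simp
qed simp

lemma binomial_pred_fact:
  assumes "1 \<le> l" and "l \<le> k"
  shows "real ((k - 1) choose (l - 1)) = fact (k - 1) / (fact (l - 1) * fact (k - l))"
proof -
  have "k - 1 - (l - 1) = k - l"
    using assms by auto
  with assms show ?thesis
    using binomial_fact[of "l - 1" "k - 1", where 'a = real] by simp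
qed

text \<open>At the configuration \<open>(1, \<dots>, 1)\<close> every permuted summand of the defining recursion
  is the same, and the \<open>(k - 1)!\<close> permutations turn the factorials into a binomial coefficient.\<close>

lemma corr_fun_ones:
  assumes k: "k \<ge> 2"
  shows "corr_fun M E N (replicate k 1) = prob_fun M E N (replicate k 1) -
    (\<Sum>l = 1..k - 1. real ((k - 1) choose (l - 1)) *
       corr_fun M E N (replicate l 1) * prob_fun M E N (replicate (k - l) 1))"
proof -
  let ?T = "\<lambda>l. corr_fun M E N (replicate l 1) * prob_fun M E N (replicate (k - l) 1)"
  let ?perm = "\<lambda>\<sigma>. map (\<lambda>i. replicate k (1 :: nat) ! \<sigma> i) [0..<k]"
  have "corr_fun M E N (replicate k 1) = prob_fun M E N (replicate k 1) -
      (\<Sum>\<sigma> \<in> {\<sigma>. \<sigma> permutes {1..<k}}. \<Sum>l = 1..k - 1. 1 / (fact (l - 1) * fact (k - l)) *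
         corr_fun M E N (take l (?perm \<sigma>)) * prob_fun M E N (drop l (?perm \<sigma>)))"
    using corr_fun.simps[of M E N "replicate k 1"] k by simp
  also have "(\<Sum>\<sigma> \<in> {\<sigma>. \<sigma> permutes {1..<k}}. \<Sum>l = 1..k - 1. 1 / (fact (l - 1) * fact (k - l)) *
         corr_fun M E N (take l (?perm \<sigma>)) * prob_fun M E N (drop l (?perm \<sigma>)))
      = (\<Sum>\<sigma> \<in> {\<sigma>. \<sigma> permutes {1..<k}}. \<Sum>l = 1..k - 1. 1 / (fact (l - 1) * fact (k - l)) * ?T l)"
  proof (rule sum.cong[OF refl], rule sum.cong[OF refl])
    fix \<sigma> l assume \<sigma>: "\<sigma> \<in> {\<sigma>. \<sigma> permutes {1..<k}}" and l: "l \<in> {1..k - 1}"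
    have "?perm \<sigma> = replicate k 1"
      using \<sigma> by (intro map_nth_replicate_permutes) auto
    moreover have "l \<le> k"
      using l by auto
    ultimately show "1 / (fact (l - 1) * fact (k - l)) *
        corr_fun M E N (take l (?perm \<sigma>)) * prob_fun M E N (drop l (?perm \<sigma>)) =
        1 / (fact (l - 1) * fact (k - l)) * ?T l"
      by (simp add: min_def mult.assoc)
  qed
  also have "(\<Sum>\<sigma> \<in> {\<sigma>. \<sigma> permutes {1..<k}}. \<Sum>l = 1..k - 1. 1 / (fact (l - 1) * fact (k - l)) * ?T l)
      = fact (k - 1) * (\<Sum>l = 1..k - 1. 1 / (fact (l - 1) * fact (k - l)) * ?T l)"
    by (simp add: card_permutations)
  also have "\<dots> = (\<Sum>l = 1..k - 1. real ((k - 1) choose (l - 1)) * ?T l)"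
    unfolding sum_distrib_left
  proof (rule sum.cong[OF refl])
    fix l assume "l \<in> {1..k - 1}"
    then have "real ((k - 1) choose (l - 1)) = fact (k - 1) / (fact (l - 1) * fact (k - l))"
      by (intro binomial_pred_fact) auto
    then show "fact (k - 1) * (1 / (fact (l - 1) * fact (k - l)) * ?T l) = real ((k - 1) choose (l - 1)) * ?T l"
      by simp
  qed
  finally show ?thesis
    by (simp add: mult.assoc)
qed

context symmetric_family
begin

lemma scaled_prob_fun_ones_rec:
  assumes "1 \<le> k" and "k \<le> N"
  shows "real N ^ k * prob_fun M E N (replicate k 1) =
    (\<Sum>l = 1..k. real ((k - 1) choose (l - 1)) * (real N ^ l * corr_fun M E N (replicate l 1)) *
       (real N ^ (k - l) * prob_fun M E N (replicate (k - l) 1)))"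
    (is "_ = (\<Sum>l = 1..k. ?F l)")
proof (cases "k = 1")
  case True
  then show ?thesis
    by (simp add: corr_fun.simps prob_fun_Nil)
next
  case False
  with assms have k: "k \<ge> 2" by simp
  have split_power: "real N ^ k * (real ((k - 1) choose (l - 1)) * corr_fun M E N (replicate l 1) *
      prob_fun M E N (replicate (k - l) 1)) = ?F l" if "l \<in> {1..k - 1}" for l
  proof -
    have "l + (k - l) = k"
      using that by auto
    then have "real N ^ k = real N ^ l * real N ^ (k - l)"
      by (metis power_add)
    then show ?thesis by (simp add: mult_ac)
  qed
  have "{1..k} = insert k {1..k - 1}"
    using k by auto
  then have "(\<Sum>l = 1..k. ?F l) = ?F k + (\<Sum>l = 1..k - 1. ?F l)"
    by (simp only:) (rule sum.insert, auto)
  also have "?F k = real N ^ k * corr_fun M E N (replicate k 1)"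
    by (simp add: prob_fun_Nil)
  also have "(\<Sum>l = 1..k - 1. ?F l) = real N ^ k * (\<Sum>l = 1..k - 1. real ((k - 1) choose (l - 1)) *
      corr_fun M E N (replicate l 1) * prob_fun M E N (replicate (k - l) 1))"
    unfolding sum_distrib_left by (rule sum.cong[OF refl split_power[symmetric]])
  also have "real N ^ k * corr_fun M E N (replicate k 1) + \<dots> = real N ^ k * prob_fun M E N (replicate k 1)"
    unfolding corr_fun_ones[OF k] by (simp add: algebra_simps)
  finally show ?thesis ..
qed

lemma scaled_prob_fun_ones_eq_moments:
  assumes c: "\<And>l. 1 \<le> l \<Longrightarrow> l \<le> N \<Longrightarrow> real N ^ l * corr_fun M E N (replicate l 1) = c l"
  shows "k \<le> N \<Longrightarrow> real N ^ k * prob_fun M E N (replicate k 1) = moments c k"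
proof (induction k rule: less_induct)
  case (less k)
  show ?case
  proof (cases "k = 0")
    case True
    then show ?thesis by (simp add: prob_fun_Nil)
  next
    case False
    have "real N ^ k * prob_fun M E N (replicate k 1) =
        (\<Sum>l = 1..k. real ((k - 1) choose (l - 1)) * (real N ^ l * corr_fun M E N (replicate l 1)) *
           (real N ^ (k - l) * prob_fun M E N (replicate (k - l) 1)))"
      by (rule scaled_prob_fun_ones_rec) (use False less.prems in auto)
    also have "\<dots> = (\<Sum>l = 1..k. real ((k - 1) choose (l - 1)) * c l * moments c (k - l))"
    proof (rule sum.cong[OF refl])
      fix l assume l: "l \<in> {1..k}"
      have "real N ^ l * corr_fun M E N (replicate l 1) = c l"
        using l less.prems by (intro c) auto
      moreover have "real N ^ (k - l) * prob_fun M E N (replicate (k - l) 1) = moments c (k - l)"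
        using l less.prems by (intro less.IH) auto
      ultimately show "real ((k - 1) choose (l - 1)) * (real N ^ l * corr_fun M E N (replicate l 1)) *
          (real N ^ (k - l) * prob_fun M E N (replicate (k - l) 1)) =
          real ((k - 1) choose (l - 1)) * c l * moments c (k - l)"
        by simp
    qed
    also have "\<dots> = moments c k"
      using False by (subst (2) moments.simps) simp
    finally show ?thesis .
  qed
qed

end

section \<open>Convergence of the count probabilities\<close>

definition falling_ratio :: "nat \<Rightarrow> nat \<Rightarrow> real" where
  "falling_ratio N k = real (N choose k) * fact k / real N ^ k"

lemma binomial_mult_fact_eq_prod: "real (N choose k) * fact k = (\<Prod>i = 0..<k. real N - real i)"
  by (simp add: binomial_gbinomial gbinomial_mult_fact')

lemma abs_falling_ratio_le_1: "\<bar>falling_ratio N k\<bar> \<le> 1"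
proof (cases "k \<le> N")
  case True
  have "0 \<le> (\<Prod>i = 0..<k. real N - real i)"
    using True by (intro prod_nonneg) auto
  moreover have "(\<Prod>i = 0..<k. real N - real i) \<le> real N ^ k"
    using prod_mono[of "{0..<k}" "\<lambda>i. real N - real i" "\<lambda>_. real N"] True by auto
  ultimately show ?thesis
    using True unfolding falling_ratio_def binomial_mult_fact_eq_prod
    by (cases "N = 0") (auto simp: abs_of_nonneg divide_le_eq)
next
  case False
  then show ?thesis by (simp add: falling_ratio_def binomial_eq_0)
qed

lemma tendsto_falling_ratio: "(\<lambda>N. falling_ratio N k) \<longlonglongrightarrow> 1"
proof -
  have "(\<lambda>N. \<Prod>i = 0..<k. 1 - real i / real N) \<longlonglongrightarrow> (\<Prod>i = 0..<k. 1 - 0)"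
    by (intro tendsto_prod tendsto_diff tendsto_const lim_const_over_n)
  moreover have "eventually (\<lambda>N. (\<Prod>i = 0..<k. 1 - real i / real N) = falling_ratio N k) sequentially"
    using eventually_ge_at_top[of 1]
  proof eventually_elim
    case (elim N)
    have "falling_ratio N k = (\<Prod>i = 0..<k. (real N - real i) / real N)"
      unfolding falling_ratio_def binomial_mult_fact_eq_prod by (simp add: prod_dividef)
    also have "\<dots> = (\<Prod>i = 0..<k. 1 - real i / real N)"
      using elim by (intro prod.cong refl) (simp add: field_simps)
    finally show ?case ..
  qed
  ultimately show ?thesis
    by (simp add: Lim_transform_eventually)
qed

context symmetric_family
begin

lemma count_prob_series:
  assumes c: "\<And>l. 1 \<le> l \<Longrightarrow> l \<le> N \<Longrightarrow> real N ^ l * corr_fun M E N (replicate l 1) = c l"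
    and s: "s \<le> N"
  shows "count_prob M E N s =
    (\<Sum>j. (-1) ^ j * falling_ratio N (s + j) * moments c (s + j) / (fact s * fact j))"
proof -
  have prob_fun_ones: "prob_fun M E N (replicate k 1) = moments c k / real N ^ k" if "k \<le> N" for k
    using scaled_prob_fun_ones_eq_moments[OF c that] that
    by (cases "N = 0") (auto simp: field_simps)
  have "count_prob M E N s = (\<Sum>j\<le>N - s. real (N choose s) *
      ((-1) ^ j * real ((N - s) choose j) * prob_fun M E N (replicate (s + j) 1)))"
    unfolding count_prob_eq_config_prob config_prob_eq_alternating_sum[OF s] sum_distrib_left ..
  also have "\<dots> = (\<Sum>j\<le>N - s. (-1) ^ j * falling_ratio N (s + j) * moments c (s + j) / (fact s * fact j))"
  proof (rule sum.cong[OF refl])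
    fix j assume "j \<in> {..N - s}"
    then have sj: "s + j \<le> N" using s by auto
    have "real (N choose s) * real ((N - s) choose j) = real (N choose (s + j)) * real ((s + j) choose s)"
      using choose_mult[of s "s + j" N] sj by (metis add_diff_cancel_left' le_add1 of_nat_mult)
    also have "\<dots> = real (N choose (s + j)) * (fact (s + j) / (fact s * fact j))"
      by (simp add: binomial_fact)
    finally have binomials: "real (N choose s) * real ((N - s) choose j) =
        real (N choose (s + j)) * fact (s + j) / (fact s * fact j)"
      by simp
    have "real (N choose s) * ((-1) ^ j * real ((N - s) choose j) * (moments c (s + j) / real N ^ (s + j))) =
        (-1) ^ j * (real (N choose s) * real ((N - s) choose j)) * (moments c (s + j) / real N ^ (s + j))"
      by (simp add: mult_ac)
    also have "\<dots> = (-1) ^ j * falling_ratio N (s + j) * moments c (s + j) / (fact s * fact j)"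
      unfolding binomials falling_ratio_def by simp
    finally show "real (N choose s) * ((-1) ^ j * real ((N - s) choose j) * prob_fun M E N (replicate (s + j) 1)) =
        (-1) ^ j * falling_ratio N (s + j) * moments c (s + j) / (fact s * fact j)"
      unfolding prob_fun_ones[OF sj] .
  qed
  also have "\<dots> = (\<Sum>j. (-1) ^ j * falling_ratio N (s + j) * moments c (s + j) / (fact s * fact j))"
    using s by (intro suminf_finite[symmetric]) (auto simp: falling_ratio_def binomial_eq_0)
  finally show ?thesis .
qed

end

lemma tendsto_count_prob:
  assumes c_support: "\<And>l. l > L \<Longrightarrow> c l = 0"
    and family: "\<And>N. N \<ge> N0 \<Longrightarrow> symmetric_family (M N) (E N) N"
    and scaled_corr: "\<And>N l. N \<ge> N0 \<Longrightarrow> 1 \<le> l \<Longrightarrow> l \<le> N \<Longrightarrow>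
      real N ^ l * corr_fun (M N) (E N) N (replicate l 1) = c l"
  shows "(\<lambda>N. count_prob (M N) (E N) N s) \<longlonglongrightarrow> limit_count_prob c s"
proof -
  have "eventually (\<lambda>N. (\<Sum>j. (-1) ^ j * falling_ratio N (s + j) * moments c (s + j) / (fact s * fact j))
      = count_prob (M N) (E N) N s) sequentially"
    using eventually_ge_at_top[of "max N0 s"]
  proof eventually_elim
    case (elim N)
    then show ?case
      using symmetric_family.count_prob_series[OF family scaled_corr] by simp
  qed
  moreover have "(\<lambda>N. \<Sum>j. (-1) ^ j * falling_ratio N (s + j) * moments c (s + j) / (fact s * fact j))
      \<longlonglongrightarrow> limit_count_prob c s"
    using c_support abs_falling_ratio_le_1 tendsto_falling_ratio by (rule tendsto_limit_count_prob)
  ultimately show ?thesis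
    by (rule Lim_transform_eventually[rotated])
qed

lemma sum_binomial_minus_one:
  fixes z :: complex
  shows "(\<Sum>t = 0..l. complex_of_real ((-1) ^ (l - t) * a / b * real (l choose t)) * z ^ t) =
         complex_of_real (a / b) * (z - 1) ^ l"
proof -
  have "complex_of_real (a / b) * (z - 1) ^ l =
      (\<Sum>t\<le>l. complex_of_real (a / b) * (of_nat (l choose t) * z ^ t * (-1) ^ (l - t)))"
    using binomial_ring[of z "-1" l] by (simp add: sum_distrib_left)
  also have "\<dots> = (\<Sum>t = 0..l. complex_of_real ((-1) ^ (l - t) * a / b * real (l choose t)) * z ^ t)"
    unfolding atMost_atLeast0 by (intro sum.cong refl) (simp add: mult_ac)
  finally show ?thesis ..
qed

lemma exp_i_of_nat_mult: "exp (\<i> * complex_of_real (real t * u)) = exp (\<i> * complex_of_real u) ^ t"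
  by (metis exp_of_nat_mult mult.left_commute of_real_mult of_real_of_nat_eq)

lemma limit_count_prob_characteristic_function:
  assumes c_support: "\<And>l. l > L \<Longrightarrow> c l = 0" and c_C: "\<And>l. 1 \<le> l \<Longrightarrow> l \<le> L \<Longrightarrow> c l = C l"
  shows "(\<lambda>s. exp (\<i> * complex_of_real (u * real s)) * complex_of_real (limit_count_prob c s)) sums
           exp (\<Sum>l = 1..L. \<Sum>t = 0..l. complex_of_real ((-1) ^ (l - t) * C l / fact l * real (l choose t)) *
             exp (\<i> * complex_of_real (real t * u)))"
proof -
  have exponent: "(\<Sum>l = 1..L. \<Sum>t = 0..l. complex_of_real ((-1) ^ (l - t) * C l / fact l * real (l choose t)) *
      exp (\<i> * complex_of_real u) ^ t) =
      (\<Sum>l = 1..L. complex_of_real (c l / fact l) * (exp (\<i> * complex_of_real u) - 1) ^ l)"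
    unfolding sum_binomial_minus_one by (intro sum.cong refl) (simp add: c_C)
  show ?thesis
    unfolding mult.commute[of u] exp_i_of_nat_mult exponent
    by (rule limit_count_prob_generating_function[OF c_support])
qed

theorem mainTheorem1:
  fixes lmax :: nat and C :: "nat \<Rightarrow> real" and N0 :: nat
    and M :: "nat \<Rightarrow> 'a measure" and E :: "nat \<Rightarrow> nat \<Rightarrow> 'a set"
  assumes "lmax \<ge> 1"
    and "\<And>N. N \<ge> N0 \<Longrightarrow> prob_space (M N)"
    and "\<And>N i. N \<ge> N0 \<Longrightarrow> i < N \<Longrightarrow> E N i \<in> sets (M N)"
    and "\<And>N. N \<ge> N0 \<Longrightarrow> symmetric_events (M N) (E N) N"
    and "\<And>N k. N \<ge> N0 \<Longrightarrow> 1 \<le> k \<Longrightarrow> k \<le> N \<Longrightarrow> k \<le> lmax \<Longrightarrow>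
           corr_coeff (M N) (E N) N k = C k"
    and "\<And>N k. N \<ge> N0 \<Longrightarrow> lmax < k \<Longrightarrow> k \<le> N \<Longrightarrow>
           corr_coeff (M N) (E N) N k = 0"
  shows "\<exists>p_inf :: nat \<Rightarrow> real.
           (\<forall>s. (\<lambda>N. count_prob (M N) (E N) N s) \<longlonglongrightarrow> p_inf s) \<and>
           (\<forall>u :: real.
              (\<lambda>s. exp (\<i> * complex_of_real (u * real s)) * complex_of_real (p_inf s)) sums
              exp (\<Sum>l = 1..lmax. \<Sum>t = 0..l.
                     complex_of_real ((-1) ^ (l - t) * C l / fact l * real (l choose t)) *
                     exp (\<i> * complex_of_real (real t * u))))"
proof -
  define c where "c l = (if l \<le> lmax then C l else 0)" for l
  have c_support: "\<And>l. l > lmax \<Longrightarrow> c l = 0"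
    by (simp add: c_def)
  have family: "symmetric_family (M N) (E N) N" if "N \<ge> N0" for N
    using assms(2-4)[OF that] by (simp add: symmetric_family_def symmetric_family_axioms_def)
  have scaled_corr: "real N ^ l * corr_fun (M N) (E N) N (replicate l 1) = c l"
    if "N \<ge> N0" "1 \<le> l" "l \<le> N" for N l
    using assms(5)[OF that] assms(6)[OF that(1) _ that(3)] by (auto simp: corr_coeff_def c_def)
  have "(\<lambda>N. count_prob (M N) (E N) N s) \<longlonglongrightarrow> limit_count_prob c s" for s
    using c_support family scaled_corr by (rule tendsto_count_prob)
  moreover have "(\<lambda>s. exp (\<i> * complex_of_real (u * real s)) * complex_of_real (limit_count_prob c s)) sums
      exp (\<Sum>l = 1..lmax. \<Sum>t = 0..l. complex_of_real ((-1) ^ (l - t) * C l / fact l * real (l choose t)) *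
        exp (\<i> * complex_of_real (real t * u)))" for u
    by (rule limit_count_prob_characteristic_function[where c = c]) (simp_all add: c_def)
  ultimately show ?thesis
    by blast
qed

end
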